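(* Let $\mathcal{C}$ be a polyhedral complex with finitely many cells, each a convex polyhedron embedded in some Euclidean space, with injective isometric attaching maps, equipped with the induced Euclidean metric on each cell. Let $P_1,F_1,P_2,F_2,\dots,F_{k-1},P_k$ be a sequence of cells of $\mathcal{C}$ with $F_i\subseteq P_i\cap P_{i+1}$ for $i=1,\dots,k-1$, and let $x\in P_1$, $y\in P_k$. Let $p_0=x$, $p_k=y$ and $p_i\in F_i^\circ$ for $1\le i\le k-1$, where $F^\circ$ denotes the relative interior of $F$. Then the path formed by the segments $[p_{i-1},p_i]\subseteq P_i$ is the shortest path from $x$ to $y$ among paths passing through this sequence of cells and faces if and only if, for $i=1,\dots,k-1$, \[\pi_{F_i}\left(\frac{p_i-p_{i-1}}{\|p_i-p_{i-1}\|}\right)=\pi_{F_i}\left(\frac{p_{i+1}-p_i}{\|p_{i+1}-p_i\|}\right),\] where $\|\cdot\|$ is the Euclidean norm and $\pi_{F_i}$ denotes orthogonal projection onto the linear subspace parallel to the affine span of $F_i$ (the vector $p_i-p_{i-1}$ being computed in the Euclidean space of $P_i$ and $p_{i+1}-p_i$ in that of $P_{i+1}$, with the projections compared via the isometric identification of $F_i$).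
   Context: A path passing through the sequence of cells and faces means a path from $x$ to $y$ consisting of segments $[q_{i-1},q_i]\subseteq P_i$ with $q_0=x$, $q_k=y$, $q_i\in F_i$ for $1\le i\le k-1$; its length is $\sum_{i=1}^k\|q_i-q_{i-1}\|$. *)

theory Defs
  imports "HOL-Analysis.Analysis"
begin

definition orth_proj :: "'a::euclidean_space set \<Rightarrow> 'a \<Rightarrow> 'a" where
  "orth_proj S v = (THE w. w \<in> S \<and> (\<forall>u\<in>S. (v - w) \<bullet> u = 0))"

definition lin_dir :: "'a::euclidean_space set \<Rightarrow> 'a set" where
  "lin_dir A = {u - v | u v. u \<in> affine hull A \<and> v \<in> affine hull A}"

text \<open>
  Cells P 1, ..., P k are given in (a common copy of) Euclidean space, each in its own
  coordinates.  The face F_i appears as A i (in the coordinates of P i) and as B i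
  (in the coordinates of P (i+1)); the isometry phi i identifies them.
  A path through the cells/faces is given by the P_i-coordinates q i of the points on F_i.
  Segment i runs from seg_start to seg_end, both in coordinates of P i.\<close>
definition seg_start :: "(nat \<Rightarrow> 'a \<Rightarrow> 'a) \<Rightarrow> 'a \<Rightarrow> (nat \<Rightarrow> 'a) \<Rightarrow> nat \<Rightarrow> 'a" where
  "seg_start \<phi> x q i = (if i = 1 then x else \<phi> (i - 1) (q (i - 1)))"

definition seg_end :: "nat \<Rightarrow> 'a \<Rightarrow> (nat \<Rightarrow> 'a) \<Rightarrow> nat \<Rightarrow> 'a" where
  "seg_end k y q i = (if i = k then y else q i)"

definition through_path ::
  "nat \<Rightarrow> (nat \<Rightarrow> 'a::euclidean_space set) \<Rightarrow> (nat \<Rightarrow> 'a set) \<Rightarrow> (nat \<Rightarrow> 'a \<Rightarrow> 'a)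
     \<Rightarrow> 'a \<Rightarrow> 'a \<Rightarrow> (nat \<Rightarrow> 'a) \<Rightarrow> bool" where
  "through_path k P A \<phi> x y q \<longleftrightarrow>
     (\<forall>i\<in>{1..<k}. q i \<in> A i) \<and>
     (\<forall>i\<in>{1..k}. closed_segment (seg_start \<phi> x q i) (seg_end k y q i) \<subseteq> P i)"

definition path_len ::
  "nat \<Rightarrow> (nat \<Rightarrow> 'a::euclidean_space \<Rightarrow> 'a) \<Rightarrow> 'a \<Rightarrow> 'a \<Rightarrow> (nat \<Rightarrow> 'a) \<Rightarrow> real" where
  "path_len k \<phi> x y q = (\<Sum>i=1..k. dist (seg_start \<phi> x q i) (seg_end k y q i))"

definition seg_dir :: "nat \<Rightarrow> (nat \<Rightarrow> 'a::euclidean_space \<Rightarrow> 'a) \<Rightarrow> 'a \<Rightarrow> 'a \<Rightarrow> (nat \<Rightarrow> 'a) \<Rightarrow> nat \<Rightarrow> 'a" where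
  "seg_dir k \<phi> x y q i =
     (1 / norm (seg_end k y q i - seg_start \<phi> x q i)) *\<^sub>R (seg_end k y q i - seg_start \<phi> x q i)"

end

theory Submission imports Defs begin

text \<open>
  Once each face is transported by its gluing isometry, the length of a path through the
  cells is a sum of norms of affine functions of the break points, hence convex in them.
  So a path whose break points lie in the relative interiors of the faces is shortest iff
  it is stationary: moving the break point on face \<open>j\<close> in a direction \<open>v\<close> parallel to
  it changes the length to first order by \<open>d j \<bullet> v - d (Suc j) \<bullet> L j v\<close>, where
  \<open>d i\<close> are the unit directions of the segments and \<open>L j\<close> the orthogonal linear part of the
  gluing isometry. Necessity is Fermat's rule along such a line, which stays in the face
  for small parameters by relative interiority; sufficiency follows from the supporting
  inequality \<open>norm w + sgn w \<bullet> (z - w) \<le> norm z\<close> summed over the segments, where the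
  first-order terms telescope. Since \<open>L j\<close> is orthogonal, vanishing of the first variation
  on the direction space of face \<open>j\<close> is exactly the equality of the two projections.
\<close>

lemma orth_proj_eq_iff:
  fixes S :: "'a::euclidean_space set"
  assumes "subspace S"
  shows "orth_proj S v = w \<longleftrightarrow> w \<in> S \<and> (\<forall>u\<in>S. (v - w) \<bullet> u = 0)"
proof -
  have unique: "w' = w"
    if w: "w \<in> S" "\<forall>u\<in>S. (v - w) \<bullet> u = 0" and w': "w' \<in> S" "\<forall>u\<in>S. (v - w') \<bullet> u = 0"
    for w w'
  proof -
    have "w - w' \<in> S" using assms w w' subspace_diff by blast
    then have "(v - w') \<bullet> (w - w') = 0" "(v - w) \<bullet> (w - w') = 0"
      using w w' by auto
    then have "(w - w') \<bullet> (w - w') = 0" by (simp add: inner_diff_left)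
    then show ?thesis by simp
  qed
  obtain w0 z where w0: "w0 \<in> span S" and z: "\<And>u. u \<in> span S \<Longrightarrow> orthogonal z u" and "v = w0 + z"
    using orthogonal_subspace_decomp_exists[of S v] by metis
  moreover have "span S = S" using assms by (simp add: span_eq_iff)
  ultimately have ex: "w0 \<in> S \<and> (\<forall>u\<in>S. (v - w0) \<bullet> u = 0)"
    by (simp add: orthogonal_def)
  then have "orth_proj S v = w0"
    unfolding orth_proj_def by (rule the_equality) (use unique ex in blast)
  then show ?thesis using unique ex by blast
qed

lemma orth_proj_image_eq_iff:
  fixes S :: "'a::euclidean_space set"
  assumes L: "orthogonal_transformation L" and S: "subspace S"
  shows "L (orth_proj S d) = orth_proj (L ` S) e \<longleftrightarrow> (\<forall>v\<in>S. d \<bullet> v = e \<bullet> L v)"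
proof -
  have lin: "linear L" and inner_L: "\<And>v w. L v \<bullet> L w = v \<bullet> w"
    using L by (auto simp: orthogonal_transformation_def)
  have LS: "subspace (L ` S)" using S lin linear_subspace_image by blast
  define w where "w = orth_proj S d"
  have "w \<in> S \<and> (\<forall>u\<in>S. (d - w) \<bullet> u = 0)"
    using orth_proj_eq_iff[OF S, of d w] by (simp add: w_def)
  then have w: "w \<in> S" "\<forall>u\<in>S. w \<bullet> u = d \<bullet> u"
    by (auto simp: inner_diff_left)
  have "L w = orth_proj (L ` S) e \<longleftrightarrow> (\<forall>u\<in>S. (e - L w) \<bullet> L u = 0)"
    unfolding eq_commute[of "L w"] orth_proj_eq_iff[OF LS] using w(1) by blast
  also have "\<dots> \<longleftrightarrow> (\<forall>v\<in>S. d \<bullet> v = e \<bullet> L v)"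
    using w(2) inner_L by (auto simp: inner_diff_left)
  finally show ?thesis by (simp add: w_def)
qed

lemma lin_dir_eq_translate:
  fixes A :: "'a::euclidean_space set"
  assumes a: "a \<in> affine hull A"
  shows "lin_dir A = (\<lambda>x. x - a) ` (affine hull A)"
proof
  show "lin_dir A \<subseteq> (\<lambda>x. x - a) ` (affine hull A)"
  proof
    fix w assume "w \<in> lin_dir A"
    then obtain u v where w: "w = u - v" and "u \<in> affine hull A" "v \<in> affine hull A"
      unfolding lin_dir_def by blast
    then have "a + 1 *\<^sub>R (u - v) \<in> affine hull A"
      using mem_affine_3_minus[OF affine_affine_hull a] by blast
    then show "w \<in> (\<lambda>x. x - a) ` (affine hull A)"
      using image_eqI[of w "\<lambda>x. x - a" "a + (u - v)"] by (simp add: w)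
  qed
qed (use a in \<open>auto simp: lin_dir_def\<close>)

lemma subspace_lin_dir:
  fixes A :: "'a::euclidean_space set"
  assumes "A \<noteq> {}"
  shows "subspace (lin_dir A)"
proof -
  obtain a where "a \<in> A" using assms by blast
  then have a: "a \<in> affine hull A" by (rule hull_inc)
  show ?thesis
    unfolding lin_dir_eq_translate[OF a]
    by (rule affine_diffs_subspace_subtract[OF affine_affine_hull a])
qed

lemma lin_dir_affine_image:
  fixes A :: "'a::euclidean_space set"
  assumes "linear (\<lambda>u. f u - f 0)"
  shows "lin_dir (f ` A) = (\<lambda>u. f u - f 0) ` lin_dir A"
proof -
  define L where "L u = f u - f 0" for u
  have f: "f = (\<lambda>u. f 0 + L u)" by (simp add: L_def fun_eq_iff)
  have L: "linear L" using assms by (simp add: L_def[abs_def])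
  have "affine hull (f ` A) = (\<lambda>u. f 0 + u) ` L ` (affine hull A)"
    by (subst f) (simp add: image_image[symmetric] affine_hull_translation
        affine_hull_linear_image[OF linear_conv_bounded_linear[THEN iffD1, OF L]])
  then have hull: "affine hull (f ` A) = (\<lambda>u. f 0 + L u) ` (affine hull A)"
    by (simp add: image_image)
  have "lin_dir (f ` A) = {(f 0 + L u) - (f 0 + L v) | u v. u \<in> affine hull A \<and> v \<in> affine hull A}"
    unfolding lin_dir_def hull by blast
  also have "\<dots> = L ` lin_dir A"
    unfolding lin_dir_def by (auto simp: linear_diff[OF L, symmetric])
  finally show ?thesis by (simp add: L_def[abs_def])
qed

lemma inner_sgn_self:
  fixes w :: "'a::real_inner"
  shows "sgn w \<bullet> w = norm w"
proof (cases "w = 0")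
  case False
  then show ?thesis
    by (simp add: sgn_div_norm power2_norm_eq_inner[symmetric] power2_eq_square)
qed simp

lemma norm_ge_linearization:
  fixes w z :: "'a::real_inner"
  shows "norm w + sgn w \<bullet> (z - w) \<le> norm z"
proof -
  have "sgn w \<bullet> z \<le> norm (sgn w) * norm z" by (rule norm_cauchy_schwarz)
  also have "\<dots> \<le> norm z" by (simp add: norm_sgn)
  finally show ?thesis by (simp add: inner_diff_right inner_sgn_self)
qed

lemma has_real_derivative_norm_line:
  fixes c v :: "'a::real_inner"
  assumes "c \<noteq> 0"
  shows "((\<lambda>t. norm (c + t *\<^sub>R v)) has_real_derivative (sgn c \<bullet> v)) (at 0)"
proof -
  have "((\<lambda>t. c + t *\<^sub>R v) has_derivative (\<lambda>t. t *\<^sub>R v)) (at 0)"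
    by (auto intro!: derivative_eq_intros)
  moreover have "(norm has_derivative (\<lambda>h. h \<bullet> sgn c)) (at ((\<lambda>t. c + t *\<^sub>R v) 0))"
    using has_derivative_norm[OF assms] by simp
  ultimately have
    "((\<lambda>t. norm (c + t *\<^sub>R v)) has_derivative (\<lambda>t. (t *\<^sub>R v) \<bullet> sgn c)) (at 0)"
    by (rule has_derivative_compose[where f = "\<lambda>t. c + t *\<^sub>R v" and g = norm, unfolded o_def])
  moreover have "(\<lambda>t. (t *\<^sub>R v) \<bullet> sgn c) = (\<lambda>t. (sgn c \<bullet> v) * t)"
    by (simp add: fun_eq_iff inner_commute)
  ultimately show ?thesis by (simp add: has_field_derivative_def)
qed

lemma sum_telescope_boundary:
  fixes a b :: "nat \<Rightarrow> 'a::ab_group_add"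
  assumes "1 \<le> k"
  shows "(\<Sum>i=1..k. (if i = k then 0 else a i) - (if i = 1 then 0 else b (i - 1)))
       = (\<Sum>j\<in>{1..<k}. a j - b j)"
proof -
  have "{1..k} = insert k {1..<k}" using assms by auto
  then have "(\<Sum>i=1..k. if i = k then 0 else a i) = (\<Sum>j\<in>{1..<k}. if j = k then 0 else a j)"
    by simp
  also have "\<dots> = (\<Sum>j\<in>{1..<k}. a j)" by (rule sum.cong) auto
  finally have a: "(\<Sum>i=1..k. if i = k then 0 else a i) = (\<Sum>j\<in>{1..<k}. a j)" .
  have "{1..k} = insert 1 (Suc ` {1..<k})" using assms
    by (simp add: image_Suc_atLeastLessThan atLeastLessThanSuc_atLeastAtMost Icc_eq_insert_lb_nat)
  then have "(\<Sum>i=1..k. if i = 1 then 0 else b (i - 1))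
      = (\<Sum>i\<in>Suc ` {1..<k}. if i = 1 then 0 else b (i - 1))"
    by (simp del: image_Suc_atLeastLessThan add: image_iff)
  also have "\<dots> = (\<Sum>j\<in>{1..<k}. b j)"
    by (subst sum.reindex) auto
  finally have b: "(\<Sum>i=1..k. if i = 1 then 0 else b (i - 1)) = (\<Sum>j\<in>{1..<k}. b j)" .
  show ?thesis by (simp only: sum_subtractf a b)
qed

lemma rel_interior_add_lin_dir:
  fixes A :: "'a::euclidean_space set"
  assumes a: "a \<in> rel_interior A" and v: "v \<in> lin_dir A"
  obtains \<delta> where "\<delta> > 0" "\<And>t. \<bar>t\<bar> < \<delta> \<Longrightarrow> a + t *\<^sub>R v \<in> A"
proof -
  obtain \<epsilon> where \<epsilon>: "\<epsilon> > 0" "ball a \<epsilon> \<inter> affine hull A \<subseteq> A"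
    using a mem_rel_interior_ball by blast
  obtain u w where v: "v = u - w" and u: "u \<in> affine hull A" and w: "w \<in> affine hull A"
    using v unfolding lin_dir_def by blast
  have "a \<in> A" using a rel_interior_subset by blast
  then have "a \<in> affine hull A" by (rule hull_inc)
  from mem_affine_3_minus[OF affine_affine_hull this u w]
  have hull: "a + t *\<^sub>R v \<in> affine hull A" for t
    by (simp add: v)
  show ?thesis
  proof
    show "\<epsilon> / (norm v + 1) > 0" using \<epsilon>(1) by (simp add: add_nonneg_pos)
    fix t assume "\<bar>t\<bar> < \<epsilon> / (norm v + 1)"
    then have "\<bar>t\<bar> * (norm v + 1) < \<epsilon>" by (simp add: pos_less_divide_eq add_nonneg_pos)
    moreover have "norm (t *\<^sub>R v) \<le> \<bar>t\<bar> * (norm v + 1)"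
      by (simp add: mult_left_mono)
    ultimately have "norm (t *\<^sub>R v) < \<epsilon>" by linarith
    then have "a + t *\<^sub>R v \<in> ball a \<epsilon>" by (simp add: dist_norm)
    then show "a + t *\<^sub>R v \<in> A" using \<epsilon>(2) hull by blast
  qed
qed

lemma path_len_norm:
  "path_len k \<phi> x y q = (\<Sum>i=1..k. norm (seg_end k y q i - seg_start \<phi> x q i))"
  by (simp add: path_len_def dist_norm norm_minus_commute)

lemma seg_dir_eq_sgn:
  "seg_dir k \<phi> x y q i = sgn (seg_end k y q i - seg_start \<phi> x q i)"
  by (simp add: seg_dir_def sgn_div_norm divide_inverse)

lemma through_path_iff:
  assumes "\<forall>i\<in>{1..k}. convex (P i)"
    and "\<forall>i\<in>{1..<k}. A i \<subseteq> P i \<and> \<phi> i ` A i \<subseteq> P (Suc i)"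
    and "x \<in> P 1" and "y \<in> P k"
  shows "through_path k P A \<phi> x y q \<longleftrightarrow> (\<forall>i\<in>{1..<k}. q i \<in> A i)"
proof
  assume q: "\<forall>i\<in>{1..<k}. q i \<in> A i"
  have "closed_segment (seg_start \<phi> x q i) (seg_end k y q i) \<subseteq> P i" if i: "i \<in> {1..k}" for i
  proof (rule closed_segment_subset)
    show "seg_start \<phi> x q i \<in> P i"
    proof (cases "i = 1")
      case False
      then have j: "i - 1 \<in> {1..<k}" and i_eq: "Suc (i - 1) = i" using i by auto
      then have "\<phi> (i - 1) (q (i - 1)) \<in> P (Suc (i - 1))" using assms(2) q by blast
      then have "\<phi> (i - 1) (q (i - 1)) \<in> P i" by (simp only: i_eq)
      then show ?thesis using False by (simp add: seg_start_def)
    qed (use assms(3) in \<open>simp add: seg_start_def\<close>)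
    show "seg_end k y q i \<in> P i"
    proof (cases "i = k")
      case False
      then have "i \<in> {1..<k}" using i by auto
      then have "q i \<in> P i" using assms(2) q by blast
      then show ?thesis using False by (simp add: seg_end_def)
    qed (use assms(4) in \<open>simp add: seg_end_def\<close>)
  qed (use assms(1) i in blast)
  then show "through_path k P A \<phi> x y q" using q by (simp add: through_path_def)
qed (simp add: through_path_def)

lemma path_len_fun_upd:
  assumes j: "j \<in> {1..<k}"
  shows "path_len k \<phi> x y (q(j := z))
    = norm (z - seg_start \<phi> x q j) + norm (seg_end k y q (Suc j) - \<phi> j z)
      + (\<Sum>i\<in>{1..k} - {j, Suc j}. norm (seg_end k y q i - seg_start \<phi> x q i))"
proof -
  let ?len = "\<lambda>q i. norm (seg_end k y q i - seg_start \<phi> x q i)"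
  let ?q = "q(j := z)"
  have mem: "j \<in> {1..k}" "Suc j \<in> {1..k} - {j}" and ne: "j - 1 \<noteq> j" "j \<noteq> 0" "j \<noteq> k"
    using j by auto
  have ends: "seg_start \<phi> x ?q j = seg_start \<phi> x q j" "seg_end k y ?q j = z"
    "seg_start \<phi> x ?q (Suc j) = \<phi> j z" "seg_end k y ?q (Suc j) = seg_end k y q (Suc j)"
    using ne by (auto simp: seg_start_def seg_end_def)
  have "path_len k \<phi> x y ?q = ?len ?q j + (\<Sum>i\<in>{1..k} - {j}. ?len ?q i)"
    unfolding path_len_norm by (rule sum.remove[OF finite_atLeastAtMost mem(1)])
  also have "(\<Sum>i\<in>{1..k} - {j}. ?len ?q i) = ?len ?q (Suc j) + (\<Sum>i\<in>{1..k} - {j} - {Suc j}. ?len ?q i)"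
    by (rule sum.remove) (use mem in auto)
  also have "{1..k} - {j} - {Suc j} = {1..k} - {j, Suc j}" by auto
  also have "(\<Sum>i\<in>{1..k} - {j, Suc j}. ?len ?q i) = (\<Sum>i\<in>{1..k} - {j, Suc j}. ?len q i)"
    by (rule sum.cong) (auto simp: seg_start_def seg_end_def)
  finally show ?thesis by (simp only: ends add.assoc)
qed

lemma path_len_ge_linearization:
  assumes "1 \<le> k"
  shows "path_len k \<phi> x y p
      + (\<Sum>j\<in>{1..<k}. seg_dir k \<phi> x y p j \<bullet> (q j - p j)
                      - seg_dir k \<phi> x y p (Suc j) \<bullet> (\<phi> j (q j) - \<phi> j (p j)))
    \<le> path_len k \<phi> x y q"
proof -
  let ?d = "seg_dir k \<phi> x y p"
  let ?c = "\<lambda>q i. seg_end k y q i - seg_start \<phi> x q i"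
  define a where "a j = ?d j \<bullet> (q j - p j)" for j
  define b where "b j = ?d (Suc j) \<bullet> (\<phi> j (q j) - \<phi> j (p j))" for j
  have pointwise: "(if i = k then 0 else a i) - (if i = 1 then 0 else b (i - 1)) = ?d i \<bullet> (?c q i - ?c p i)"
    if "i \<in> {1..k}" for i
    using that by (auto simp: a_def b_def seg_start_def seg_end_def inner_diff_right)
  have "(\<Sum>j\<in>{1..<k}. a j - b j)
      = (\<Sum>i=1..k. (if i = k then 0 else a i) - (if i = 1 then 0 else b (i - 1)))"
    by (rule sum_telescope_boundary[OF assms, symmetric])
  also have "\<dots> = (\<Sum>i=1..k. ?d i \<bullet> (?c q i - ?c p i))"
    by (rule sum.cong[OF refl pointwise])
  finally have "(\<Sum>j\<in>{1..<k}. a j - b j) = (\<Sum>i=1..k. ?d i \<bullet> (?c q i - ?c p i))" .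
  then have "path_len k \<phi> x y p + (\<Sum>j\<in>{1..<k}. a j - b j)
      = (\<Sum>i=1..k. norm (?c p i) + sgn (?c p i) \<bullet> (?c q i - ?c p i))"
    by (simp add: path_len_norm sum.distrib seg_dir_eq_sgn)
  also have "\<dots> \<le> (\<Sum>i=1..k. norm (?c q i))"
    by (intro sum_mono norm_ge_linearization)
  finally show ?thesis by (simp add: path_len_norm a_def b_def)
qed

definition stationary_path ::
  "nat \<Rightarrow> (nat \<Rightarrow> 'a::euclidean_space set) \<Rightarrow> (nat \<Rightarrow> 'a \<Rightarrow> 'a) \<Rightarrow> 'a \<Rightarrow> 'a \<Rightarrow> (nat \<Rightarrow> 'a) \<Rightarrow> bool"
  where "stationary_path k A \<phi> x y p \<longleftrightarrow>
    (\<forall>j\<in>{1..<k}. \<forall>v\<in>lin_dir (A j).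
       seg_dir k \<phi> x y p j \<bullet> v = seg_dir k \<phi> x y p (Suc j) \<bullet> (\<phi> j v - \<phi> j 0))"

lemma stationary_path_iff_orth_proj:
  assumes "\<forall>i\<in>{1..<k}. orthogonal_transformation (\<lambda>u. \<phi> i u - \<phi> i 0) \<and> \<phi> i ` A i = B i"
    and "\<forall>i\<in>{1..<k}. A i \<noteq> {}"
  shows "stationary_path k A \<phi> x y p \<longleftrightarrow>
    (\<forall>i\<in>{1..<k}. \<phi> i (orth_proj (lin_dir (A i)) (seg_dir k \<phi> x y p i)) - \<phi> i 0
                   = orth_proj (lin_dir (B i)) (seg_dir k \<phi> x y p (Suc i)))"
  unfolding stationary_path_def
proof (intro ball_cong refl)
  fix i assume "i \<in> {1..<k}"
  then have L: "orthogonal_transformation (\<lambda>u. \<phi> i u - \<phi> i 0)" and B: "B i = \<phi> i ` A i"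
    and "A i \<noteq> {}" using assms by auto
  have "lin_dir (B i) = (\<lambda>u. \<phi> i u - \<phi> i 0) ` lin_dir (A i)"
    unfolding B by (rule lin_dir_affine_image[OF orthogonal_transformation_linear[OF L]])
  then show "(\<forall>v\<in>lin_dir (A i). seg_dir k \<phi> x y p i \<bullet> v = seg_dir k \<phi> x y p (Suc i) \<bullet> (\<phi> i v - \<phi> i 0))
    \<longleftrightarrow> \<phi> i (orth_proj (lin_dir (A i)) (seg_dir k \<phi> x y p i)) - \<phi> i 0
        = orth_proj (lin_dir (B i)) (seg_dir k \<phi> x y p (Suc i))"
    using orth_proj_image_eq_iff[OF L subspace_lin_dir[OF \<open>A i \<noteq> {}\<close>]] by simp
qed

lemma stationary_path_imp_path_len_le:
  assumes "1 \<le> k" and stationary: "stationary_path k A \<phi> x y p"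
    and lin: "\<forall>j\<in>{1..<k}. linear (\<lambda>u. \<phi> j u - \<phi> j 0)"
    and "\<forall>j\<in>{1..<k}. p j \<in> A j" and "\<forall>j\<in>{1..<k}. q j \<in> A j"
  shows "path_len k \<phi> x y p \<le> path_len k \<phi> x y q"
proof -
  have "seg_dir k \<phi> x y p j \<bullet> (q j - p j) = seg_dir k \<phi> x y p (Suc j) \<bullet> (\<phi> j (q j) - \<phi> j (p j))"
    if j: "j \<in> {1..<k}" for j
  proof -
    have "p j \<in> affine hull A j" "q j \<in> affine hull A j"
      using assms(4,5) j by (auto intro: hull_inc)
    then have "q j - p j \<in> lin_dir (A j)" unfolding lin_dir_def by blast
    moreover have "\<phi> j (q j) - \<phi> j (p j) = \<phi> j (q j - p j) - \<phi> j 0"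
      using linear_diff[OF lin[rule_format, OF j], of "q j" "p j"] by simp
    ultimately show ?thesis using stationary j by (simp add: stationary_path_def)
  qed
  then show ?thesis using path_len_ge_linearization[OF assms(1), of \<phi> x y p q] by simp
qed

lemma path_len_first_variation:
  assumes j: "j \<in> {1..<k}" and lin: "linear (\<lambda>u. \<phi> j u - \<phi> j 0)"
    and "seg_start \<phi> x p j \<noteq> seg_end k y p j"
    and "seg_start \<phi> x p (Suc j) \<noteq> seg_end k y p (Suc j)"
  shows "((\<lambda>t. path_len k \<phi> x y (p(j := p j + t *\<^sub>R v))) has_real_derivative
      (seg_dir k \<phi> x y p j \<bullet> v - seg_dir k \<phi> x y p (Suc j) \<bullet> (\<phi> j v - \<phi> j 0))) (at 0)"
proof -
  define L where "L = \<phi> j v - \<phi> j 0"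
  define c1 where "c1 = seg_end k y p j - seg_start \<phi> x p j"
  define c2 where "c2 = seg_end k y p (Suc j) - seg_start \<phi> x p (Suc j)"
  define R where "R = (\<Sum>i\<in>{1..k} - {j, Suc j}. norm (seg_end k y p i - seg_start \<phi> x p i))"
  have "c1 \<noteq> 0" "c2 \<noteq> 0" using assms(3,4) by (simp_all add: c1_def c2_def)
  have ends: "seg_end k y p j = p j" "seg_start \<phi> x p (Suc j) = \<phi> j (p j)"
    using j by (auto simp: seg_start_def seg_end_def)
  have line: "\<phi> j (p j + t *\<^sub>R v) = \<phi> j (p j) + t *\<^sub>R L" for t
    using linear_add[OF lin, of "p j" "t *\<^sub>R v"] linear_scale[OF lin, of t v]
    by (simp add: L_def algebra_simps)
  have "path_len k \<phi> x y (p(j := p j + t *\<^sub>R v)) = norm (p j + t *\<^sub>R v - seg_start \<phi> x p j)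
      + norm (seg_end k y p (Suc j) - \<phi> j (p j + t *\<^sub>R v)) + R" for t
    unfolding R_def by (rule path_len_fun_upd[OF j])
  then have len: "(\<lambda>t. path_len k \<phi> x y (p(j := p j + t *\<^sub>R v)))
      = (\<lambda>t. norm (c1 + t *\<^sub>R v) + norm (c2 + t *\<^sub>R (- L)) + R)"
    by (simp add: fun_eq_iff c1_def c2_def ends line algebra_simps)
  have variation: "seg_dir k \<phi> x y p j \<bullet> v - seg_dir k \<phi> x y p (Suc j) \<bullet> (\<phi> j v - \<phi> j 0)
      = sgn c1 \<bullet> v + sgn c2 \<bullet> (- L) + 0"
    by (simp add: seg_dir_eq_sgn c1_def c2_def L_def inner_diff_right)
  show ?thesis
    unfolding len variation by (intro DERIV_add has_real_derivative_norm_line DERIV_const) fact+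
qed

lemma path_len_minimal_imp_stationary_path:
  assumes lin: "\<forall>j\<in>{1..<k}. linear (\<lambda>u. \<phi> j u - \<phi> j 0)"
    and interior: "\<forall>j\<in>{1..<k}. p j \<in> rel_interior (A j)"
    and nondegenerate: "\<forall>i\<in>{1..k}. seg_start \<phi> x p i \<noteq> seg_end k y p i"
    and minimal: "\<forall>j\<in>{1..<k}. \<forall>z\<in>A j. path_len k \<phi> x y p \<le> path_len k \<phi> x y (p(j := z))"
  shows "stationary_path k A \<phi> x y p"
  unfolding stationary_path_def
proof (intro ballI)
  fix j v assume j: "j \<in> {1..<k}" and v: "v \<in> lin_dir (A j)"
  have "j \<in> {1..k}" "Suc j \<in> {1..k}" using j by auto
  with nondegenerate have D: "((\<lambda>t. path_len k \<phi> x y (p(j := p j + t *\<^sub>R v))) has_real_derivative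
      (seg_dir k \<phi> x y p j \<bullet> v - seg_dir k \<phi> x y p (Suc j) \<bullet> (\<phi> j v - \<phi> j 0))) (at 0)"
    using j lin by (intro path_len_first_variation) auto
  obtain \<delta> where \<delta>: "\<delta> > 0" and near: "\<And>t. \<bar>t\<bar> < \<delta> \<Longrightarrow> p j + t *\<^sub>R v \<in> A j"
    using rel_interior_add_lin_dir interior j v by blast
  have "\<forall>t. \<bar>0 - t\<bar> < \<delta> \<longrightarrow>
      path_len k \<phi> x y (p(j := p j + 0 *\<^sub>R v)) \<le> path_len k \<phi> x y (p(j := p j + t *\<^sub>R v))"
    using minimal j near by simp
  from DERIV_local_min[OF D \<delta> this]
  show "seg_dir k \<phi> x y p j \<bullet> v = seg_dir k \<phi> x y p (Suc j) \<bullet> (\<phi> j v - \<phi> j 0)" by simp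
qed

lemma shortest_path_iff_stationary_path:
  assumes "1 \<le> k" and lin: "\<forall>j\<in>{1..<k}. linear (\<lambda>u. \<phi> j u - \<phi> j 0)"
    and interior: "\<forall>j\<in>{1..<k}. p j \<in> rel_interior (A j)"
    and nondegenerate: "\<forall>i\<in>{1..k}. seg_start \<phi> x p i \<noteq> seg_end k y p i"
    and through: "\<And>q. through_path k P A \<phi> x y q \<longleftrightarrow> (\<forall>i\<in>{1..<k}. q i \<in> A i)"
  shows "(through_path k P A \<phi> x y p \<and>
          (\<forall>q. through_path k P A \<phi> x y q \<longrightarrow> path_len k \<phi> x y p \<le> path_len k \<phi> x y q))
      \<longleftrightarrow> stationary_path k A \<phi> x y p"
proof -
  have pA: "\<forall>j\<in>{1..<k}. p j \<in> A j" using interior rel_interior_subset by blast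
  show ?thesis
  proof
    assume "through_path k P A \<phi> x y p \<and>
          (\<forall>q. through_path k P A \<phi> x y q \<longrightarrow> path_len k \<phi> x y p \<le> path_len k \<phi> x y q)"
    then have minimal: "path_len k \<phi> x y p \<le> path_len k \<phi> x y q" if "\<forall>i\<in>{1..<k}. q i \<in> A i" for q
      using through that by blast
    have "\<forall>j\<in>{1..<k}. \<forall>z\<in>A j. path_len k \<phi> x y p \<le> path_len k \<phi> x y (p(j := z))"
      using pA by (intro ballI minimal) simp
    then show "stationary_path k A \<phi> x y p"
      by (rule path_len_minimal_imp_stationary_path[OF lin interior nondegenerate])
  next
    assume "stationary_path k A \<phi> x y p"
    from stationary_path_imp_path_len_le[OF assms(1) this lin pA]
    show "through_path k P A \<phi> x y p \<and>
          (\<forall>q. through_path k P A \<phi> x y q \<longrightarrow> path_len k \<phi> x y p \<le> path_len k \<phi> x y q)"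
      using through pA by blast
  qed
qed

theorem lemma5p1:
  fixes k :: nat and P A B :: "nat \<Rightarrow> 'a::euclidean_space set"
    and \<phi> :: "nat \<Rightarrow> 'a \<Rightarrow> 'a" and x y :: 'a and p :: "nat \<Rightarrow> 'a"
  assumes "k \<ge> 1"
    and "\<forall>i\<in>{1..k}. polyhedron (P i)"
    and "\<forall>i\<in>{1..<k}. A i face_of P i \<and> B i face_of P (Suc i)"
    and "\<forall>i\<in>{1..<k}. (\<forall>u v. dist (\<phi> i u) (\<phi> i v) = dist u v) \<and> \<phi> i ` A i = B i"
    and "x \<in> P 1" and "y \<in> P k"
    and "\<forall>i\<in>{1..<k}. p i \<in> rel_interior (A i)"
    and "\<forall>i\<in>{1..k}. seg_start \<phi> x p i \<noteq> seg_end k y p i"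
  shows "(through_path k P A \<phi> x y p \<and>
          (\<forall>q. through_path k P A \<phi> x y q \<longrightarrow> path_len k \<phi> x y p \<le> path_len k \<phi> x y q))
     \<longleftrightarrow> (\<forall>i\<in>{1..<k}.
           \<phi> i (orth_proj (lin_dir (A i)) (seg_dir k \<phi> x y p i)) - \<phi> i 0
             = orth_proj (lin_dir (B i)) (seg_dir k \<phi> x y p (Suc i)))"
proof -
  have iso: "\<forall>i\<in>{1..<k}. orthogonal_transformation (\<lambda>u. \<phi> i u - \<phi> i 0) \<and> \<phi> i ` A i = B i"
    using assms(4) by (simp add: orthogonal_transformation_isometry dist_norm)
  then have lin: "\<forall>j\<in>{1..<k}. linear (\<lambda>u. \<phi> j u - \<phi> j 0)"
    using orthogonal_transformation_linear by blast
  have "\<forall>i\<in>{1..k}. convex (P i)" using assms(2) polyhedron_imp_convex by blast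
  moreover have "\<forall>i\<in>{1..<k}. A i \<subseteq> P i \<and> \<phi> i ` A i \<subseteq> P (Suc i)"
    using assms(3,4) face_of_imp_subset by blast
  ultimately have through: "through_path k P A \<phi> x y q \<longleftrightarrow> (\<forall>i\<in>{1..<k}. q i \<in> A i)" for q
    using assms(5,6) by (rule through_path_iff)
  have nonempty: "\<forall>i\<in>{1..<k}. A i \<noteq> {}" using assms(7) rel_interior_subset by blast
  show ?thesis
    unfolding shortest_path_iff_stationary_path[OF assms(1) lin assms(7,8) through]
    by (rule stationary_path_iff_orth_proj[OF iso nonempty])
qed

end
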